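(* Let $\kappa\ge 1$ and $n\ge 1$ be integers, let $0\le\epsilon<1$, and let $q=(q_0,\dots,q_{2^\kappa-1})\in\mathbb{R}^{2^\kappa}$ satisfy $q_i\ge 0$ for all $i$ and $\sum_{i=0}^{2^\kappa-1}q_i=1$. Then for every subspace $S$ of $W=\mathbb{F}_2^\kappa$, $\psi(S,n,\epsilon,q)\ge 0$.
   Context: $W=\mathbb{F}_2^\kappa$. For $i\in\{0,\dots,2^\kappa-1\}$, $\nu(i)\in W$ denotes the binary expansion of $i$. For a subspace $S\subseteq W$ and $q\in\mathbb{R}^{2^\kappa}$ (indexed from $0$), $\zeta(S,q)=\sum_{i:\nu(i)\in S}q_i$. For a subspace $S$ and integer $d$, $\Xi(S,d)$ is the set of all $d$-dimensional subspaces of $S$. Define $\phi(S,n,\epsilon,q)=\epsilon^{n(1-\zeta(S,q))}$ (with the convention $0^0=1$), and define $\psi$ recursively on the dimension $d$ of $S$ by $\psi(S,n,\epsilon,q)=\phi(S,n,\epsilon,q)-\sum_{i=0}^{d-1}\sum_{T\in\Xi(S,i)}\psi(T,n,\epsilon,q)$ (so for $d=0$, $\psi(\{0\})=\phi(\{0\})$). *)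

theory Defs
  imports Complex_Main
begin

text \<open>W = F_2^kappa, vectors represented as bool lists of length kappa
  (True = 1, False = 0); addition is componentwise xor.\<close>

definition W :: "nat \<Rightarrow> bool list set" where
  "W \<kappa> = {v. length v = \<kappa>}"

definition zerov :: "nat \<Rightarrow> bool list" where
  "zerov \<kappa> = replicate \<kappa> False"

definition vadd :: "bool list \<Rightarrow> bool list \<Rightarrow> bool list" where
  "vadd u v = map2 (\<noteq>) u v"

definition nu :: "nat \<Rightarrow> nat \<Rightarrow> bool list" where
  "nu \<kappa> i = map (\<lambda>j. odd (i div 2 ^ j)) [0..<\<kappa>]"

text \<open>Subspace of F_2^kappa (scalars are only 0 and 1).\<close>
definition subspace2 :: "nat \<Rightarrow> bool list set \<Rightarrow> bool" where
  "subspace2 \<kappa> S \<longleftrightarrow> S \<subseteq> W \<kappa> \<and> zerov \<kappa> \<in> S \<and> (\<forall>u\<in>S. \<forall>v\<in>S. vadd u v \<in> S)"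

text \<open>F_2-sum of a finite set of vectors (linear combination with coefficients 1).\<close>
definition vsum :: "nat \<Rightarrow> bool list set \<Rightarrow> bool list" where
  "vsum \<kappa> A = map (\<lambda>j. odd (card {v\<in>A. v ! j})) [0..<\<kappa>]"

definition span2 :: "nat \<Rightarrow> bool list set \<Rightarrow> bool list set" where
  "span2 \<kappa> B = {vsum \<kappa> A | A. A \<subseteq> B}"

definition indep2 :: "nat \<Rightarrow> bool list set \<Rightarrow> bool" where
  "indep2 \<kappa> B \<longleftrightarrow> (\<forall>A\<subseteq>B. A \<noteq> {} \<longrightarrow> vsum \<kappa> A \<noteq> zerov \<kappa>)"

definition is_basis2 :: "nat \<Rightarrow> bool list set \<Rightarrow> bool list set \<Rightarrow> bool" where
  "is_basis2 \<kappa> S B \<longleftrightarrow> finite B \<and> B \<subseteq> S \<and> indep2 \<kappa> B \<and> span2 \<kappa> B = S"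

definition dim2 :: "nat \<Rightarrow> bool list set \<Rightarrow> nat" where
  "dim2 \<kappa> S = card (SOME B. is_basis2 \<kappa> S B)"

definition Xi :: "nat \<Rightarrow> bool list set \<Rightarrow> nat \<Rightarrow> bool list set set" where
  "Xi \<kappa> S d = {T. subspace2 \<kappa> T \<and> T \<subseteq> S \<and> dim2 \<kappa> T = d}"

definition zeta :: "nat \<Rightarrow> bool list set \<Rightarrow> (nat \<Rightarrow> real) \<Rightarrow> real" where
  "zeta \<kappa> S q = (\<Sum>i\<in>{i. i < 2 ^ \<kappa> \<and> nu \<kappa> i \<in> S}. q i)"

definition phi :: "nat \<Rightarrow> bool list set \<Rightarrow> nat \<Rightarrow> real \<Rightarrow> (nat \<Rightarrow> real) \<Rightarrow> real" where
  "phi \<kappa> S n \<epsilon> q = (let e = real n * (1 - zeta \<kappa> S q) in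
      if \<epsilon> = 0 \<and> e = 0 then 1 else \<epsilon> powr e)"

text \<open>Recursion on dimension, implemented with a fuel argument k (always called with
  k = dim S; for k \<ge> dim T the value does not depend on k).\<close>
fun psi_aux :: "nat \<Rightarrow> nat \<Rightarrow> bool list set \<Rightarrow> nat \<Rightarrow> real \<Rightarrow> (nat \<Rightarrow> real) \<Rightarrow> real" where
  "psi_aux \<kappa> 0 S n \<epsilon> q = phi \<kappa> S n \<epsilon> q"
| "psi_aux \<kappa> (Suc k) S n \<epsilon> q = phi \<kappa> S n \<epsilon> q
     - (\<Sum>i<dim2 \<kappa> S. \<Sum>T\<in>Xi \<kappa> S i. psi_aux \<kappa> k T n \<epsilon> q)"

definition psi :: "nat \<Rightarrow> bool list set \<Rightarrow> nat \<Rightarrow> real \<Rightarrow> (nat \<Rightarrow> real) \<Rightarrow> real" where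
  "psi \<kappa> S n \<epsilon> q = psi_aux \<kappa> (dim2 \<kappa> S) S n \<epsilon> q"

end

theory Submission imports Defs begin

text \<open>
  Select every index \<open>i < 2^\<kappa>\<close> independently, with probability \<open>1 - \<epsilon>^(n q\<^sub>i)\<close>.
  Since \<open>\<Sum> q\<^sub>i = 1\<close>, the probability that all selected vectors \<open>\<nu>(i)\<close> lie in a subspace
  \<open>S\<close> is \<open>\<Prod>\<^bsub>\<nu>(i) \<notin> S\<^esub> \<epsilon>^(n q\<^sub>i) = \<phi>(S)\<close>. Grouping the outcomes by the span \<open>T\<close> of the
  selected vectors writes \<open>\<phi>(S)\<close> as the sum over subspaces \<open>T \<subseteq> S\<close> of the probability
  that the span is exactly \<open>T\<close>; the recursion defining \<open>\<psi>\<close> is exactly the Moebius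
  inversion of this sum, so \<open>\<psi>(S)\<close> is the probability that the span equals \<open>S\<close>.
\<close>

subsection \<open>Linear algebra over GF(2)\<close>

lemma finite_W: "finite (W k)"
proof -
  have "W k = {xs. set xs \<subseteq> (UNIV :: bool set) \<and> length xs = k}"
    by (auto simp: W_def)
  then show ?thesis
    using finite_lists_length_eq[of "UNIV :: bool set" k] by simp
qed

lemma subspace2_W: "subspace2 k (W k)"
  by (auto simp: subspace2_def W_def zerov_def vadd_def)

lemma nu_in_W: "nu k i \<in> W k"
  by (simp add: nu_def W_def)

lemma subspace2_finite: "subspace2 k S \<Longrightarrow> finite S"
  using finite_W finite_subset by (auto simp: subspace2_def)

lemma subspace2_length: "subspace2 k S \<Longrightarrow> v \<in> S \<Longrightarrow> length v = k"
  by (auto simp: subspace2_def W_def)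

lemma length_vadd [simp]: "length (vadd u v) = min (length u) (length v)"
  by (simp add: vadd_def)

lemma nth_vadd: "j < length u \<Longrightarrow> j < length v \<Longrightarrow> vadd u v ! j = (u ! j \<noteq> v ! j)"
  by (simp add: vadd_def)

lemma length_vsum [simp]: "length (vsum k A) = k"
  by (simp add: vsum_def)

lemma nth_vsum: "j < k \<Longrightarrow> vsum k A ! j = odd (card {v \<in> A. v ! j})"
  by (simp add: vsum_def)

lemma length_zerov [simp]: "length (zerov k) = k"
  by (simp add: zerov_def)

lemma vadd_self: "length a = k \<Longrightarrow> vadd a a = zerov k"
  by (rule nth_equalityI) (auto simp: nth_vadd zerov_def)

lemma vadd_left_cancel:
  assumes "length a = k" "length b = k" "length c = k" "vadd a b = vadd a c"
  shows "b = c"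
proof (rule nth_equalityI)
  fix j assume "j < length b"
  with assms have "(a ! j \<noteq> b ! j) = (a ! j \<noteq> c ! j)"
    by (metis nth_vadd)
  then show "b ! j = c ! j" by blast
qed (use assms in simp)

lemma vsum_empty: "vsum k {} = zerov k"
  by (simp add: vsum_def zerov_def map_replicate_const)

lemma vsum_singleton: "length x = k \<Longrightarrow> vsum k {x} = x"
proof (rule nth_equalityI)
  fix j assume "length x = k" "j < length (vsum k {x})"
  moreover have "{v \<in> {x}. v ! j} = (if x ! j then {x} else {})" by auto
  ultimately show "vsum k {x} ! j = x ! j" by (simp add: nth_vsum)
qed simp

lemma vsum_Un_disjoint:
  assumes "finite A" "finite C" "A \<inter> C = {}"
  shows "vsum k (A \<union> C) = vadd (vsum k A) (vsum k C)"
proof (rule nth_equalityI)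
  fix j assume "j < length (vsum k (A \<union> C))"
  then have j: "j < k" by simp
  have "{v \<in> A \<union> C. v ! j} = {v \<in> A. v ! j} \<union> {v \<in> C. v ! j}" by auto
  then have "card {v \<in> A \<union> C. v ! j} = card {v \<in> A. v ! j} + card {v \<in> C. v ! j}"
    using assms by (simp add: card_Un_disjoint disjoint_iff)
  then show "vsum k (A \<union> C) ! j = vadd (vsum k A) (vsum k C) ! j"
    using j by (simp add: nth_vsum nth_vadd)
qed simp

lemma vsum_insert:
  assumes "finite A" "x \<notin> A" "length x = k"
  shows "vsum k (insert x A) = vadd x (vsum k A)"
  using vsum_Un_disjoint[of "{x}" A k] assms by (simp add: vsum_singleton)

lemma vsum_in_subspace2:
  assumes "subspace2 k S" "finite A" "A \<subseteq> S"
  shows "vsum k A \<in> S"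
  using assms(2,3)
proof (induction A rule: finite_induct)
  case empty
  then show ?case using assms(1) by (simp add: vsum_empty subspace2_def)
next
  case (insert x A)
  then have "x \<in> S" "vsum k A \<in> S" by auto
  then show ?case
    using insert assms(1) by (simp add: vsum_insert subspace2_length) (simp add: subspace2_def)
qed

text \<open>Two subsets of \<open>B\<close> with equal sums: cancelling the common part leaves
  \<open>vsum (A - A') = vsum (A' - A)\<close>, so the symmetric difference sums to zero.\<close>

lemma inj_on_vsum_Pow:
  assumes "indep2 k B" "finite B"
  shows "inj_on (vsum k) (Pow B)"
proof (rule inj_onI)
  fix A A' assume A: "A \<in> Pow B" and A': "A' \<in> Pow B" and eq: "vsum k A = vsum k A'"
  have fin: "finite X" if "X \<subseteq> B" for X using assms(2) that finite_subset by blast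
  have vsum_split: "vsum k X = vadd (vsum k (X \<inter> Y)) (vsum k (X - Y))"
    if "X \<subseteq> B" "Y \<subseteq> B" for X Y
  proof -
    have "vsum k X = vsum k ((X \<inter> Y) \<union> (X - Y))" by (simp add: Int_Diff_Un)
    also have "\<dots> = vadd (vsum k (X \<inter> Y)) (vsum k (X - Y))"
      using that fin by (intro vsum_Un_disjoint) auto
    finally show ?thesis .
  qed
  have "vadd (vsum k (A \<inter> A')) (vsum k (A - A')) = vadd (vsum k (A \<inter> A')) (vsum k (A' - A))"
    using vsum_split[of A A'] vsum_split[of A' A] A A' eq by (simp add: Int_commute)
  then have "vsum k (A - A') = vsum k (A' - A)"
    by (rule vadd_left_cancel[rotated 3]) simp_all
  then have "vsum k ((A - A') \<union> (A' - A)) = zerov k"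
    using A A' fin by (subst vsum_Un_disjoint) (auto intro: vadd_self)
  moreover have "(A - A') \<union> (A' - A) \<subseteq> B" using A A' by auto
  ultimately have "(A - A') \<union> (A' - A) = {}"
    using assms(1) unfolding indep2_def by blast
  then show "A = A'" by blast
qed

lemma card_basis2:
  assumes "is_basis2 k S B"
  shows "card S = 2 ^ card B"
proof -
  have "S = vsum k ` Pow B"
    using assms by (auto simp: is_basis2_def span2_def)
  then have "card S = card (Pow B)"
    using inj_on_vsum_Pow[of k B] assms by (simp add: is_basis2_def card_image)
  then show ?thesis
    using assms by (simp add: is_basis2_def card_Pow)
qed

lemma indep2_insert:
  assumes "indep2 k B" "finite B" "length v = k" "v \<notin> span2 k B"
  shows "indep2 k (insert v B)"
  unfolding indep2_def
proof (intro allI impI)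
  fix A assume A: "A \<subseteq> insert v B" "A \<noteq> {}"
  show "vsum k A \<noteq> zerov k"
  proof (cases "v \<in> A")
    case False
    then show ?thesis using A assms(1) unfolding indep2_def by blast
  next
    case True
    have "finite (A - {v})" using A assms(2) finite_subset by blast
    then have sum_A: "vsum k A = vadd v (vsum k (A - {v}))"
      using vsum_insert[of "A - {v}" v k] True assms(3) by (simp add: insert_absorb)
    have "A - {v} \<subseteq> B" using A by auto
    then have "vsum k (A - {v}) \<in> span2 k B" by (auto simp: span2_def)
    then have ne: "vsum k (A - {v}) \<noteq> v" using assms(4) by auto
    show ?thesis
    proof
      assume "vsum k A = zerov k"
      then have "vadd v (vsum k (A - {v})) = vadd v v"
        using sum_A vadd_self[OF assms(3)] by simp
      then have "vsum k (A - {v}) = v"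
        by (rule vadd_left_cancel[OF assms(3) length_vsum assms(3)])
      with ne show False ..
    qed
  qed
qed

text \<open>A maximal independent subset of \<open>S\<close> spans \<open>S\<close>, by \<open>indep2_insert\<close>.\<close>

lemma ex_basis2:
  assumes S: "subspace2 k S"
  shows "\<exists>B. is_basis2 k S B"
proof -
  let ?F = "{B. B \<subseteq> S \<and> indep2 k B}"
  have fin: "finite (card ` ?F)" using subspace2_finite[OF S] by simp
  have "{} \<in> ?F" by (simp add: indep2_def)
  then obtain B where B: "B \<in> ?F" and card_B: "card B = Max (card ` ?F)"
    using Max_in[OF fin] by (metis (no_types, lifting) empty_iff image_iff)
  have max: "card B' \<le> card B" if "B' \<in> ?F" for B'
    unfolding card_B using Max_ge[OF fin] that by blast
  have finB: "finite B" using B subspace2_finite[OF S] finite_subset by auto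
  have "span2 k B \<subseteq> S"
    using B finB S by (auto simp: span2_def intro!: vsum_in_subspace2 dest: finite_subset)
  moreover have "v \<in> span2 k B" if v: "v \<in> S" for v
  proof (rule ccontr)
    assume nv: "v \<notin> span2 k B"
    have lv: "length v = k" using S v by (rule subspace2_length)
    have "v \<notin> B"
    proof
      assume "v \<in> B"
      then have "vsum k {v} \<in> span2 k B" by (auto simp: span2_def)
      then show False using nv vsum_singleton[OF lv] by simp
    qed
    have "insert v B \<in> ?F"
      using B v indep2_insert[OF _ finB lv nv] by auto
    then show False
      using max[of "insert v B"] \<open>v \<notin> B\<close> finB by simp
  qed
  ultimately show ?thesis using B finB by (auto simp: is_basis2_def)
qed

lemma card_subspace2:
  assumes "subspace2 k S"
  shows "card S = 2 ^ dim2 k S"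
  using card_basis2 someI_ex[OF ex_basis2[OF assms]] unfolding dim2_def by blast

lemma dim2_strict_mono:
  assumes "subspace2 k S" "subspace2 k T" "T \<subset> S"
  shows "dim2 k T < dim2 k S"
proof -
  have "card T < card S"
    using assms subspace2_finite psubset_card_mono by blast
  then show ?thesis using assms by (simp add: card_subspace2)
qed

definition subspace2_hull :: "nat \<Rightarrow> bool list set \<Rightarrow> bool list set" where
  "subspace2_hull k X = \<Inter>{T. subspace2 k T \<and> X \<subseteq> T}"

lemma finite_subspaces2_subset: "subspace2 k S \<Longrightarrow> finite {T. subspace2 k T \<and> T \<subseteq> S}"
  by (rule finite_subset[of _ "Pow S"]) (auto dest: subspace2_finite)

lemma subspace2_hull:
  assumes "X \<subseteq> W k"
  shows "subspace2 k (subspace2_hull k X)"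
proof -
  have "W k \<in> {T. subspace2 k T \<and> X \<subseteq> T}" using assms subspace2_W by auto
  then show ?thesis unfolding subspace2_def subspace2_hull_def by (auto simp: subspace2_def)
qed

lemma subspace2_hull_subset_iff:
  "subspace2 k S \<Longrightarrow> subspace2_hull k X \<subseteq> S \<longleftrightarrow> X \<subseteq> S"
  unfolding subspace2_hull_def by blast

subsection \<open>The recursion for \<open>\<psi>\<close> as Moebius inversion\<close>

lemma psi_aux_eq_if_phi_sum:
  assumes phi: "\<And>S. subspace2 k S \<Longrightarrow> phi k S n \<epsilon> q = (\<Sum>T | subspace2 k T \<and> T \<subseteq> S. g T)"
  shows "subspace2 k S \<Longrightarrow> dim2 k S \<le> m \<Longrightarrow> psi_aux k m S n \<epsilon> q = g S"
proof (induction m arbitrary: S)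
  case 0
  then have "{T. subspace2 k T \<and> T \<subseteq> S} = {S}"
    using dim2_strict_mono[OF 0(1)] by fastforce
  then show ?case using phi[OF 0(1)] by simp
next
  case (Suc m)
  let ?Sub = "{T. subspace2 k T \<and> T \<subseteq> S}"
  have fin: "finite ?Sub" using Suc(2) by (rule finite_subspaces2_subset)
  have proper_dim: "dim2 k T < dim2 k S" if "T \<in> ?Sub - {S}" for T
    using that dim2_strict_mono[OF Suc(2)] by blast
  have "(\<Sum>i<dim2 k S. \<Sum>T\<in>Xi k S i. psi_aux k m T n \<epsilon> q)
      = (\<Sum>i<dim2 k S. \<Sum>T | T \<in> ?Sub - {S} \<and> dim2 k T = i. g T)"
  proof (rule sum.cong[OF refl])
    fix i assume i: "i \<in> {..<dim2 k S}"
    then have "Xi k S i = {T. T \<in> ?Sub - {S} \<and> dim2 k T = i}"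
      by (auto simp: Xi_def)
    then show "(\<Sum>T\<in>Xi k S i. psi_aux k m T n \<epsilon> q) = (\<Sum>T | T \<in> ?Sub - {S} \<and> dim2 k T = i. g T)"
      using Suc i by (intro sum.cong Suc.IH) auto
  qed
  also have "\<dots> = (\<Sum>T\<in>?Sub - {S}. g T)"
    using proper_dim fin by (intro sum.group) auto
  also have "\<dots> = phi k S n \<epsilon> q - g S"
    using phi[OF Suc(2)] sum.remove[OF fin, of S g] Suc(2) by simp
  finally show ?case by simp
qed

subsection \<open>\<open>\<phi>\<close> as a probability of random selections\<close>

definition powr0 :: "real \<Rightarrow> real \<Rightarrow> real" where
  "powr0 x y = (if x = 0 \<and> y = 0 then 1 else x powr y)"

lemma phi_eq_powr0: "phi k S n \<epsilon> q = powr0 \<epsilon> (real n * (1 - zeta k S q))"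
  by (simp add: phi_def powr0_def Let_def)

lemma powr0_add: "0 \<le> a \<Longrightarrow> 0 \<le> b \<Longrightarrow> powr0 x (a + b) = powr0 x a * powr0 x b"
  by (auto simp: powr0_def powr_add)

lemma powr0_sum:
  "finite K \<Longrightarrow> (\<And>i. i \<in> K \<Longrightarrow> 0 \<le> c i) \<Longrightarrow> powr0 x (sum c K) = (\<Prod>i\<in>K. powr0 x (c i))"
  by (induction K rule: finite_induct) (auto simp: powr0_add sum_nonneg, simp add: powr0_def)

lemma powr0_bounds:
  assumes "0 \<le> x" "x \<le> 1" "0 \<le> y"
  shows "0 \<le> powr0 x y" "powr0 x y \<le> 1"
  using assms by (auto simp: powr0_def intro: powr_le1)

lemma one_minus_zeta:
  assumes "(\<Sum>i<2 ^ k. q i) = 1"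
  shows "1 - zeta k S q = (\<Sum>i | i < 2 ^ k \<and> nu k i \<notin> S. q i)"
proof -
  have "{..<2 ^ k} = {i. i < 2 ^ k \<and> nu k i \<in> S} \<union> {i. i < 2 ^ k \<and> nu k i \<notin> S}" by auto
  then have "(\<Sum>i<2 ^ k. q i) = zeta k S q + (\<Sum>i | i < 2 ^ k \<and> nu k i \<notin> S. q i)"
    unfolding zeta_def by (simp only:) (rule sum.union_disjoint; auto)
  then show ?thesis using assms by simp
qed

lemma phi_eq_prod_powr0:
  assumes "\<forall>i<2 ^ k. q i \<ge> 0" "(\<Sum>i<2 ^ k. q i) = 1"
  shows "phi k S n \<epsilon> q = (\<Prod>i | i < 2 ^ k \<and> nu k i \<notin> S. powr0 \<epsilon> (real n * q i))"
  using assms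
  by (simp add: phi_eq_powr0 one_minus_zeta sum_distrib_left) (subst powr0_sum; simp)

text \<open>The probability that every selected index lies in \<open>J\<close>, when index \<open>i\<close> is
  selected with probability \<open>1 - a i\<close>.\<close>

lemma sum_Pow_prod_complement:
  fixes a :: "'a \<Rightarrow> 'b :: comm_ring_1"
  assumes "finite I" "J \<subseteq> I"
  shows "(\<Sum>R\<in>Pow J. (\<Prod>i\<in>R. 1 - a i) * (\<Prod>i\<in>I - R. a i)) = (\<Prod>i\<in>I - J. a i)"
proof -
  have fin: "finite J" using assms finite_subset by blast
  have prod_split: "(\<Prod>i\<in>I - R. a i) = (\<Prod>i\<in>J - R. a i) * (\<Prod>i\<in>I - J. a i)" if "R \<subseteq> J" for R
  proof -
    have "I - R = (J - R) \<union> (I - J)" using that assms(2) by auto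
    then have "(\<Prod>i\<in>I - R. a i) = (\<Prod>i\<in>(J - R) \<union> (I - J). a i)" by (simp only:)
    also have "\<dots> = (\<Prod>i\<in>J - R. a i) * (\<Prod>i\<in>I - J. a i)"
      by (rule prod.union_disjoint) (use assms(1) fin in auto)
    finally show ?thesis .
  qed
  have "(\<Sum>R\<in>Pow J. (\<Prod>i\<in>R. 1 - a i) * (\<Prod>i\<in>J - R. a i)) = (\<Prod>i\<in>J. (1 - a i) + a i)"
    using fin by (rule prod_add[symmetric])
  then have total: "(\<Sum>R\<in>Pow J. (\<Prod>i\<in>R. 1 - a i) * (\<Prod>i\<in>J - R. a i)) = 1"
    by simp
  have "(\<Sum>R\<in>Pow J. (\<Prod>i\<in>R. 1 - a i) * (\<Prod>i\<in>I - R. a i))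
      = (\<Sum>R\<in>Pow J. (\<Prod>i\<in>R. 1 - a i) * (\<Prod>i\<in>J - R. a i)) * (\<Prod>i\<in>I - J. a i)"
    unfolding sum_distrib_right
  proof (rule sum.cong[OF refl])
    fix R assume "R \<in> Pow J"
    then show "(\<Prod>i\<in>R. 1 - a i) * (\<Prod>i\<in>I - R. a i)
        = (\<Prod>i\<in>R. 1 - a i) * (\<Prod>i\<in>J - R. a i) * (\<Prod>i\<in>I - J. a i)"
      using prod_split[of R] by (simp add: mult.assoc)
  qed
  then show ?thesis
    unfolding total by simp
qed

definition selection_prob :: "nat \<Rightarrow> (nat \<Rightarrow> real) \<Rightarrow> nat set \<Rightarrow> real" where
  "selection_prob k a R = (\<Prod>i\<in>R. 1 - a i) * (\<Prod>i\<in>{..<2 ^ k} - R. a i)"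

text \<open>The probability that the selected vectors span exactly \<open>T\<close>.\<close>

definition span_prob :: "nat \<Rightarrow> (nat \<Rightarrow> real) \<Rightarrow> bool list set \<Rightarrow> real" where
  "span_prob k a T =
    (\<Sum>R | R \<subseteq> {..<2 ^ k} \<and> subspace2_hull k (nu k ` R) = T. selection_prob k a R)"

lemma span_prob_nonneg:
  assumes "\<And>i. i < 2 ^ k \<Longrightarrow> 0 \<le> a i \<and> a i \<le> 1"
  shows "0 \<le> span_prob k a T"
  unfolding span_prob_def selection_prob_def using assms
  by (intro sum_nonneg mult_nonneg_nonneg prod_nonneg) (auto simp: subset_iff)

lemma sum_selection_prob_eq_sum_span_prob:
  assumes S: "subspace2 k S"
  shows "(\<Sum>R | R \<subseteq> {..<2 ^ k} \<and> nu k ` R \<subseteq> S. selection_prob k a R)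
    = (\<Sum>T | subspace2 k T \<and> T \<subseteq> S. span_prob k a T)"
proof -
  let ?hull = "\<lambda>R. subspace2_hull k (nu k ` R)"
  let ?w = "selection_prob k a"
  let ?Sel = "{R. R \<subseteq> {..<2 ^ k} \<and> nu k ` R \<subseteq> S}"
  let ?Sub = "{T. subspace2 k T \<and> T \<subseteq> S}"
  have fin_Sub: "finite ?Sub" using S by (rule finite_subspaces2_subset)
  have fin_Sel: "finite ?Sel"
    by (rule finite_subset[of _ "Pow {..<2 ^ k}"]) auto
  have "subspace2 k (?hull R)" for R
    by (rule subspace2_hull) (auto intro: nu_in_W)
  then have hull_in_Sub: "?hull ` ?Sel \<subseteq> ?Sub"
    using subspace2_hull_subset_iff[OF S] by auto
  have "sum ?w ?Sel = (\<Sum>T\<in>?Sub. sum ?w {R. R \<in> ?Sel \<and> ?hull R = T})"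
    by (rule sum.group[OF fin_Sel fin_Sub hull_in_Sub, symmetric])
  also have "\<dots> = (\<Sum>T\<in>?Sub. span_prob k a T)"
  proof (rule sum.cong[OF refl])
    fix T assume T: "T \<in> ?Sub"
    have "nu k ` R \<subseteq> S" if "?hull R = T" for R
      using subspace2_hull_subset_iff[OF S, of "nu k ` R"] that T by simp
    then have "{R. R \<in> ?Sel \<and> ?hull R = T} = {R. R \<subseteq> {..<2 ^ k} \<and> ?hull R = T}"
      by blast
    then show "sum ?w {R. R \<in> ?Sel \<and> ?hull R = T} = span_prob k a T"
      by (simp add: span_prob_def)
  qed
  finally show ?thesis .
qed

lemma phi_eq_sum_span_prob:
  assumes "\<forall>i<2 ^ k. q i \<ge> 0" "(\<Sum>i<2 ^ k. q i) = 1" "subspace2 k S"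
  shows "phi k S n \<epsilon> q = (\<Sum>T | subspace2 k T \<and> T \<subseteq> S. span_prob k (\<lambda>i. powr0 \<epsilon> (real n * q i)) T)"
proof -
  let ?a = "\<lambda>i. powr0 \<epsilon> (real n * q i)"
  let ?J = "{i. i < 2 ^ k \<and> nu k i \<in> S}"
  have "{i. i < 2 ^ k \<and> nu k i \<notin> S} = {..<2 ^ k} - ?J" by auto
  then have "phi k S n \<epsilon> q = (\<Prod>i\<in>{..<2 ^ k} - ?J. ?a i)"
    using phi_eq_prod_powr0[OF assms(1,2)] by simp
  also have "\<dots> = (\<Sum>R\<in>Pow ?J. selection_prob k ?a R)"
    unfolding selection_prob_def by (rule sum_Pow_prod_complement[symmetric]) auto
  also have "Pow ?J = {R. R \<subseteq> {..<2 ^ k} \<and> nu k ` R \<subseteq> S}" by auto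
  also have "(\<Sum>R\<in>\<dots>. selection_prob k ?a R) = (\<Sum>T | subspace2 k T \<and> T \<subseteq> S. span_prob k ?a T)"
    by (rule sum_selection_prob_eq_sum_span_prob[OF assms(3)])
  finally show ?thesis .
qed

theorem lemma1:
  fixes \<kappa> n :: nat and \<epsilon> :: real and q :: "nat \<Rightarrow> real" and S :: "bool list set"
  assumes "\<kappa> \<ge> 1" and "n \<ge> 1"
    and "0 \<le> \<epsilon>" and "\<epsilon> < 1"
    and "\<forall>i<2 ^ \<kappa>. q i \<ge> 0"
    and "(\<Sum>i<2 ^ \<kappa>. q i) = 1"
    and "subspace2 \<kappa> S"
  shows "psi \<kappa> S n \<epsilon> q \<ge> 0"
proof -
  let ?a = "\<lambda>i. powr0 \<epsilon> (real n * q i)"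
  have "psi \<kappa> S n \<epsilon> q = span_prob \<kappa> ?a S"
    unfolding psi_def
    by (rule psi_aux_eq_if_phi_sum[OF phi_eq_sum_span_prob[OF assms(5,6)] assms(7) order_refl])
  moreover have "0 \<le> span_prob \<kappa> ?a S"
    using assms(3-5) by (intro span_prob_nonneg) (simp add: powr0_bounds)
  ultimately show ?thesis by simp
qed

end
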